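(* Let $p$ be an odd prime and $\mathbb O$ Zorn's split octonion algebra over $\mathbb Q_p$. For integers $a_1,\dots,a_8$ let $\Lambda$ be the set of all $\begin{pmatrix}x&(y_1,y_2,y_3)\\ (z_1,z_2,z_3)&w\end{pmatrix}\in\mathbb O$ with $x\in p^{a_1}\mathbb Z_p$, $y_1\in p^{a_2}\mathbb Z_p$, $y_2\in p^{a_3}\mathbb Z_p$, $y_3\in p^{a_4}\mathbb Z_p$, $z_1\in p^{a_5}\mathbb Z_p$, $z_2\in p^{a_6}\mathbb Z_p$, $z_3\in p^{a_7}\mathbb Z_p$, $w\in p^{a_8}\mathbb Z_p$. Then $\Lambda$ is an order in $\mathbb O$ if and only if all of the following hold: $a_1=a_8=0$; $a_2+a_5\ge0$, $a_3+a_6\ge0$, $a_4+a_7\ge0$; $a_2+a_3\ge a_7$, $a_2+a_4\ge a_6$, $a_3+a_4\ge a_5$, $a_5+a_6\ge a_4$, $a_5+a_7\ge a_3$, $a_6+a_7\ge a_2$.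
   Context: Zorn's split octonion algebra $\mathbb O$ over a field $k$ is the set of formal matrices $\begin{pmatrix}a&\vec v\\ \vec w&d\end{pmatrix}$ with $a,d\in k$, $\vec v,\vec w\in k^3$, with entrywise addition and multiplication $\begin{pmatrix}a&\vec v\\ \vec w&d\end{pmatrix}\begin{pmatrix}\alpha&\vec\phi\\ \vec\psi&\delta\end{pmatrix}=\begin{pmatrix}a\alpha+\vec v\cdot\vec\psi & a\vec\phi+\delta\vec v-\vec w\times\vec\psi\\ \alpha\vec w+d\vec\psi+\vec v\times\vec\phi & d\delta+\vec w\cdot\vec\phi\end{pmatrix}$ (standard dot and cross products), identity $\mathbf 1=\begin{pmatrix}1&0\\0&1\end{pmatrix}$. A lattice in $\mathbb O$ is a finitely generated $\mathbb Z_p$-submodule $\Lambda$ with $\Lambda\otimes\mathbb Q_p=\mathbb O$. An order is a lattice which is a unital subring (contains $\mathbf 1$ and is closed under multiplication). *)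

theory Defs
  imports Main "HOL-Computational_Algebra.Primes"
begin

text \<open>The field Q_p is characterised axiomatically (up to isomorphism) as a field 'k
  with a discrete valuation v (v is only meaningful on nonzero elements) such that
  v(p) = 1, the residue field is Z/p (every integral element is congruent to an
  integer mod p), and 'k is complete for v.\<close>

definition is_Qp :: "nat \<Rightarrow> ('k::field \<Rightarrow> int) \<Rightarrow> bool" where
  "is_Qp p v \<longleftrightarrow>
     prime p \<and>
     (\<forall>x y. x \<noteq> 0 \<longrightarrow> y \<noteq> 0 \<longrightarrow> v (x * y) = v x + v y) \<and>
     (\<forall>x y. x \<noteq> 0 \<longrightarrow> y \<noteq> 0 \<longrightarrow> x + y \<noteq> 0 \<longrightarrow> min (v x) (v y) \<le> v (x + y)) \<and>
     (of_nat p :: 'k) \<noteq> 0 \<and> v (of_nat p) = 1 \<and>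
     (\<forall>x. x \<noteq> 0 \<longrightarrow> 0 \<le> v x \<longrightarrow> (\<exists>n::int. x = of_int n \<or> 1 \<le> v (x - of_int n))) \<and>
     (\<forall>s :: nat \<Rightarrow> 'k.
        (\<forall>N::int. \<exists>M. \<forall>m\<ge>M. \<forall>n\<ge>M. s m \<noteq> s n \<longrightarrow> N \<le> v (s m - s n)) \<longrightarrow>
        (\<exists>L. \<forall>N::int. \<exists>M. \<forall>n\<ge>M. s n \<noteq> L \<longrightarrow> N \<le> v (s n - L)))"

definition Zp :: "('k::field \<Rightarrow> int) \<Rightarrow> 'k set" where
  "Zp v = {z. z = 0 \<or> 0 \<le> v z}"

definition pZp :: "nat \<Rightarrow> ('k::field \<Rightarrow> int) \<Rightarrow> int \<Rightarrow> 'k set" where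
  "pZp p v a = {(of_nat p) powi a * z | z. z \<in> Zp v}"

datatype 'k oct = Oct 'k "'k \<times> 'k \<times> 'k" "'k \<times> 'k \<times> 'k" 'k

type_synonym 'k vec3 = "'k \<times> 'k \<times> 'k"

fun dot3 :: "'k::comm_ring_1 vec3 \<Rightarrow> 'k vec3 \<Rightarrow> 'k" where
  "dot3 (a1, a2, a3) (b1, b2, b3) = a1 * b1 + a2 * b2 + a3 * b3"

fun cross3 :: "'k::comm_ring_1 vec3 \<Rightarrow> 'k vec3 \<Rightarrow> 'k vec3" where
  "cross3 (a1, a2, a3) (b1, b2, b3) = (a2 * b3 - a3 * b2, a3 * b1 - a1 * b3, a1 * b2 - a2 * b1)"

fun add3 :: "'k::comm_ring_1 vec3 \<Rightarrow> 'k vec3 \<Rightarrow> 'k vec3" where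
  "add3 (a1, a2, a3) (b1, b2, b3) = (a1 + b1, a2 + b2, a3 + b3)"

fun sc3 :: "'k::comm_ring_1 \<Rightarrow> 'k vec3 \<Rightarrow> 'k vec3" where
  "sc3 c (a1, a2, a3) = (c * a1, c * a2, c * a3)"

fun minus3 :: "'k::comm_ring_1 vec3 \<Rightarrow> 'k vec3 \<Rightarrow> 'k vec3" where
  "minus3 (a1, a2, a3) (b1, b2, b3) = (a1 - b1, a2 - b2, a3 - b3)"

fun oct_mult :: "'k::comm_ring_1 oct \<Rightarrow> 'k oct \<Rightarrow> 'k oct" where
  "oct_mult (Oct a v w d) (Oct \<alpha> \<phi> \<psi> \<delta>) =
     Oct (a * \<alpha> + dot3 v \<psi>)
         (minus3 (add3 (sc3 a \<phi>) (sc3 \<delta> v)) (cross3 w \<psi>))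
         (add3 (add3 (sc3 \<alpha> w) (sc3 d \<psi>)) (cross3 v \<phi>))
         (d * \<delta> + dot3 w \<phi>)"

fun oct_add :: "'k::comm_ring_1 oct \<Rightarrow> 'k oct \<Rightarrow> 'k oct" where
  "oct_add (Oct a v w d) (Oct a' v' w' d') = Oct (a + a') (add3 v v') (add3 w w') (d + d')"

fun oct_smult :: "'k::comm_ring_1 \<Rightarrow> 'k oct \<Rightarrow> 'k oct" where
  "oct_smult c (Oct a v w d) = Oct (c * a) (sc3 c v) (sc3 c w) (c * d)"

definition oct_zero :: "'k::comm_ring_1 oct" where
  "oct_zero = Oct 0 (0, 0, 0) (0, 0, 0) 0"

definition oct_one :: "'k::comm_ring_1 oct" where
  "oct_one = Oct 1 (0, 0, 0) (0, 0, 0) 1"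

definition lin_comb :: "('k::comm_ring_1 \<times> 'k oct) list \<Rightarrow> 'k oct" where
  "lin_comb cs = foldr (\<lambda>(c, g) acc. oct_add (oct_smult c g) acc) cs oct_zero"

text \<open>A lattice: a finitely generated Z_p-submodule whose Q_p-span is all of O
  (for a submodule of the torsion-free module O this is Lambda \<otimes> Q_p = O).\<close>
definition is_lattice :: "('k::field \<Rightarrow> int) \<Rightarrow> 'k oct set \<Rightarrow> bool" where
  "is_lattice v L \<longleftrightarrow>
     (\<exists>gs :: 'k oct list.
        L = {lin_comb (zip cs gs) | cs. length cs = length gs \<and> set cs \<subseteq> Zp v}) \<and>
     (\<forall>x. \<exists>cs gs. set gs \<subseteq> L \<and> x = lin_comb (zip cs gs))"

definition is_order :: "('k::field \<Rightarrow> int) \<Rightarrow> 'k oct set \<Rightarrow> bool" where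
  "is_order v L \<longleftrightarrow> is_lattice v L \<and> oct_one \<in> L \<and>
     (\<forall>x\<in>L. \<forall>y\<in>L. oct_mult x y \<in> L)"

definition Lam :: "nat \<Rightarrow> ('k::field \<Rightarrow> int) \<Rightarrow> int \<Rightarrow> int \<Rightarrow> int \<Rightarrow> int \<Rightarrow> int \<Rightarrow> int \<Rightarrow> int \<Rightarrow> int
    \<Rightarrow> 'k oct set" where
  "Lam p v a1 a2 a3 a4 a5 a6 a7 a8 =
     {Oct x (y1, y2, y3) (z1, z2, z3) w | x y1 y2 y3 z1 z2 z3 w.
        x \<in> pZp p v a1 \<and> y1 \<in> pZp p v a2 \<and> y2 \<in> pZp p v a3 \<and> y3 \<in> pZp p v a4 \<and>
        z1 \<in> pZp p v a5 \<and> z2 \<in> pZp p v a6 \<and> z3 \<in> pZp p v a7 \<and> w \<in> pZp p v a8}"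

end

theory Submission
  imports Defs
begin

(* The proof proceeds as follows.
   (1) Valuation facts: v(p^a) = a for every integer a, and the ideals p^a Z_p are
       closed under +, - and satisfy (p^a Z_p)(p^b Z_p) \<subseteq> p^c Z_p whenever c \<le> a + b.
   (2) Lam is a lattice, with the eight scaled coordinate vectors as generators.
   (3) Necessity: 1 \<in> Lam forces a1, a8 \<le> 0; each product of two generators is a single
       coordinate \<plusminus>p^(ai+aj) in some slot k, so multiplicative closure forces ak \<le> ai + aj.
       Squaring the first and last generators gives a1, a8 \<ge> 0.
   (4) Sufficiency: every coordinate of a product is a signed sum of products of
       coordinates whose exponents add up to at least the target exponent, by (1).
   The argument does not use that p is odd. *)

section \<open>The valuation and the fractional ideals p^a Z_p\<close>

lemma Qp_valuation:
  assumes "is_Qp p v"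
  shows v_mult: "\<And>x y. x \<noteq> 0 \<Longrightarrow> y \<noteq> 0 \<Longrightarrow> v (x * y) = v x + v y"
    and v_ultrametric: "\<And>x y. x \<noteq> 0 \<Longrightarrow> y \<noteq> 0 \<Longrightarrow> x + y \<noteq> 0 \<Longrightarrow> min (v x) (v y) \<le> v (x + y)"
    and p_nonzero: "(of_nat p :: 'k::field) \<noteq> 0"
    and v_p: "v (of_nat p :: 'k) = 1"
  using assms unfolding is_Qp_def by auto

lemma v_one: assumes "is_Qp p (v::'k::field \<Rightarrow> int)" shows "v 1 = 0"
  using v_mult[OF assms, of 1 1] by simp

lemma v_inverse:
  assumes "is_Qp p (v::'k::field \<Rightarrow> int)" and "x \<noteq> 0"
  shows "v (inverse x) = - v x"
  using v_mult[OF assms(1), of x "inverse x"] assms v_one[OF assms(1)] by simp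

lemma v_uminus: assumes "is_Qp p (v::'k::field \<Rightarrow> int)" shows "v (- x) = v x"
proof (cases "x = 0")
  case False
  have "v (-1::'k) = 0"
    using v_mult[OF assms, of "-1" "-1"] v_one[OF assms] by simp
  then show ?thesis using v_mult[OF assms, of "-1" x] False by simp
qed simp

lemma v_power:
  assumes "is_Qp p (v::'k::field \<Rightarrow> int)"
  shows "v ((of_nat p::'k) ^ n) = int n"
proof (induction n)
  case 0
  then show ?case using v_one[OF assms] by simp
next
  case (Suc n)
  then show ?case
    using v_mult[OF assms, of "of_nat p" "(of_nat p::'k) ^ n"] p_nonzero[OF assms] v_p[OF assms]
    by simp
qed

lemma v_powi:
  assumes "is_Qp p (v::'k::field \<Rightarrow> int)"
  shows "v ((of_nat p::'k) powi a) = a"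
proof (cases "a \<ge> 0")
  case True
  then have "a = int (nat a)" by simp
  then show ?thesis using v_power[OF assms, of "nat a"] by (metis power_int_of_nat)
next
  case False
  then have a: "a = - int (nat (- a))" by simp
  have "(of_nat p::'k) ^ nat (- a) \<noteq> 0" using p_nonzero[OF assms] by simp
  then show ?thesis
    using a v_power[OF assms, of "nat (- a)"] v_inverse[OF assms]
    by (metis power_int_minus power_int_of_nat)
qed

lemma pZp_eq:
  assumes Q: "is_Qp p (v::'k::field \<Rightarrow> int)"
  shows "pZp p v a = {x. x = 0 \<or> a \<le> v x}"
proof (intro set_eqI iffI)
  let ?P = "(of_nat p::'k) powi a"
  have P0: "?P \<noteq> 0" using p_nonzero[OF Q] by simp
  fix x
  {
    assume "x \<in> pZp p v a"
    then obtain z where x: "x = ?P * z" and z: "z = 0 \<or> 0 \<le> v z"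
      unfolding pZp_def Zp_def by auto
    show "x \<in> {x. x = 0 \<or> a \<le> v x}"
      using x z v_mult[OF Q P0, of z] v_powi[OF Q, of a] by (cases "z = 0") auto
  next
    assume x: "x \<in> {x. x = 0 \<or> a \<le> v x}"
    have "inverse ?P * x \<in> Zp v"
      using x v_mult[OF Q, of "inverse ?P" x] v_inverse[OF Q P0] v_powi[OF Q, of a] P0
      unfolding Zp_def by (cases "x = 0") auto
    moreover have "x = ?P * (inverse ?P * x)" using P0 by simp
    ultimately show "x \<in> pZp p v a" unfolding pZp_def by blast
  }
qed

lemma pZp_zero: "0 \<in> pZp p v a"
  unfolding pZp_def Zp_def by auto

lemma pZp_add:
  assumes "is_Qp p (v::'k::field \<Rightarrow> int)" "x \<in> pZp p v a" "y \<in> pZp p v a"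
  shows "x + y \<in> pZp p v a"
  using assms(2,3) v_ultrametric[OF assms(1), of x y] unfolding pZp_eq[OF assms(1)]
  by (cases "x = 0"; cases "y = 0"; cases "x + y = 0"; auto)

lemma pZp_uminus_iff:
  assumes "is_Qp p (v::'k::field \<Rightarrow> int)"
  shows "- x \<in> pZp p v a \<longleftrightarrow> x \<in> pZp p v a"
  using v_uminus[OF assms, of x] unfolding pZp_eq[OF assms] by auto

lemma pZp_diff:
  assumes "is_Qp p (v::'k::field \<Rightarrow> int)" "x \<in> pZp p v a" "y \<in> pZp p v a"
  shows "x - y \<in> pZp p v a"
  using pZp_add[OF assms(1,2)] assms(3) pZp_uminus_iff[OF assms(1)] by (metis diff_conv_add_uminus)

lemma pZp_mult:
  assumes "is_Qp p (v::'k::field \<Rightarrow> int)" "x \<in> pZp p v a" "y \<in> pZp p v b" "c \<le> a + b"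
  shows "x * y \<in> pZp p v c"
  using assms(2-4) v_mult[OF assms(1), of x y] unfolding pZp_eq[OF assms(1)]
  by (cases "x = 0"; cases "y = 0"; auto)

lemma powi_in_pZp_iff:
  assumes "is_Qp p (v::'k::field \<Rightarrow> int)"
  shows "(of_nat p::'k) powi b \<in> pZp p v a \<longleftrightarrow> a \<le> b"
  using v_powi[OF assms, of b] p_nonzero[OF assms] unfolding pZp_eq[OF assms] by auto

lemma powi_mult_in_pZp_iff:
  assumes "is_Qp p (v::'k::field \<Rightarrow> int)"
  shows "(of_nat p::'k) powi b * (of_nat p::'k) powi c \<in> pZp p v a \<longleftrightarrow> a \<le> b + c"
  using powi_in_pZp_iff[OF assms, of "b + c" a] p_nonzero[OF assms] by (simp add: power_int_add)

lemma one_in_pZp_iff: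
  assumes "is_Qp p (v::'k::field \<Rightarrow> int)"
  shows "1 \<in> pZp p v a \<longleftrightarrow> a \<le> 0"
  using powi_in_pZp_iff[OF assms, of 0 a] by simp

section \<open>The diagonal lattice Lam\<close>

lemma Lam_mem:
  "Oct x (y1, y2, y3) (z1, z2, z3) w \<in> Lam p v a1 a2 a3 a4 a5 a6 a7 a8 \<longleftrightarrow>
     x \<in> pZp p v a1 \<and> y1 \<in> pZp p v a2 \<and> y2 \<in> pZp p v a3 \<and> y3 \<in> pZp p v a4 \<and>
     z1 \<in> pZp p v a5 \<and> z2 \<in> pZp p v a6 \<and> z3 \<in> pZp p v a7 \<and> w \<in> pZp p v a8"
  unfolding Lam_def by auto

lemma times_powi_in_pZp_iff:
  assumes Q: "is_Qp p (v::'k::field \<Rightarrow> int)"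
  shows "c * (of_nat p::'k) powi a \<in> pZp p v a \<longleftrightarrow> c \<in> Zp v"
proof
  assume "c \<in> Zp v"
  then show "c * (of_nat p::'k) powi a \<in> pZp p v a" unfolding pZp_def by (auto simp: mult.commute)
next
  assume "c * (of_nat p::'k) powi a \<in> pZp p v a"
  then obtain z where "c * (of_nat p::'k) powi a = (of_nat p::'k) powi a * z" "z \<in> Zp v"
    unfolding pZp_def by auto
  then show "c \<in> Zp v" using p_nonzero[OF Q] by (simp add: mult.commute)
qed

definition Lam_gens :: "nat \<Rightarrow> int \<Rightarrow> int \<Rightarrow> int \<Rightarrow> int \<Rightarrow> int \<Rightarrow> int \<Rightarrow> int \<Rightarrow> int
    \<Rightarrow> 'k::field oct list" where
  "Lam_gens p a1 a2 a3 a4 a5 a6 a7 a8 =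
    [Oct (of_nat p powi a1) (0,0,0) (0,0,0) 0, Oct 0 (of_nat p powi a2,0,0) (0,0,0) 0,
     Oct 0 (0,of_nat p powi a3,0) (0,0,0) 0, Oct 0 (0,0,of_nat p powi a4) (0,0,0) 0,
     Oct 0 (0,0,0) (of_nat p powi a5,0,0) 0, Oct 0 (0,0,0) (0,of_nat p powi a6,0) 0,
     Oct 0 (0,0,0) (0,0,of_nat p powi a7) 0, Oct 0 (0,0,0) (0,0,0) (of_nat p powi a8)]"

lemma lin_comb_Lam_gens:
  "lin_comb (zip [c1, c2, c3, c4, c5, c6, c7, c8] (Lam_gens p a1 a2 a3 a4 a5 a6 a7 a8)) =
     Oct (c1 * of_nat p powi a1) (c2 * of_nat p powi a2, c3 * of_nat p powi a3, c4 * of_nat p powi a4)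
         (c5 * of_nat p powi a5, c6 * of_nat p powi a6, c7 * of_nat p powi a7)
         (c8 * (of_nat p :: 'k::field) powi a8)"
  by (simp add: Lam_gens_def lin_comb_def oct_zero_def)

lemma Lam_gens_in_Lam:
  assumes "is_Qp p (v::'k::field \<Rightarrow> int)"
  shows "set (Lam_gens p a1 a2 a3 a4 a5 a6 a7 a8 :: 'k oct list) \<subseteq> Lam p v a1 a2 a3 a4 a5 a6 a7 a8"
  by (simp add: Lam_gens_def Lam_mem powi_in_pZp_iff[OF assms] pZp_zero)

lemma length_8_conv:
  "length cs = 8 \<Longrightarrow> \<exists>c1 c2 c3 c4 c5 c6 c7 c8. cs = [c1, c2, c3, c4, c5, c6, c7, c8]"
  by (simp add: length_Suc_conv numeral_eq_Suc) blast

text \<open>Lam is the Z_p-span of its generators, and their Q_p-span is the whole algebra: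
  an octonion is the combination of the generators with its rescaled coordinates.\<close>

lemma Lam_is_lattice:
  assumes Q: "is_Qp p (v::'k::field \<Rightarrow> int)"
  shows "is_lattice v (Lam p v a1 a2 a3 a4 a5 a6 a7 a8)"
proof -
  let ?P = "of_nat p :: 'k"
  let ?L = "Lam p v a1 a2 a3 a4 a5 a6 a7 a8"
  let ?gs = "Lam_gens p a1 a2 a3 a4 a5 a6 a7 a8 :: 'k oct list"
  define coeffs where "coeffs x0 y1 y2 y3 z1 z2 z3 w =
    [x0 / ?P powi a1, y1 / ?P powi a2, y2 / ?P powi a3, y3 / ?P powi a4,
     z1 / ?P powi a5, z2 / ?P powi a6, z3 / ?P powi a7, w / ?P powi a8]"
    for x0 y1 y2 y3 z1 z2 z3 w
  have rescale: "u / ?P powi a * ?P powi a = u" for u a using p_nonzero[OF Q] by simp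
  have decomp: "Oct x0 (y1, y2, y3) (z1, z2, z3) w = lin_comb (zip (coeffs x0 y1 y2 y3 z1 z2 z3 w) ?gs)"
    for x0 y1 y2 y3 z1 z2 z3 w
    unfolding coeffs_def lin_comb_Lam_gens rescale ..
  have unscale: "u / ?P powi a \<in> Zp v" if "u \<in> pZp p v a" for u a
    using times_powi_in_pZp_iff[OF Q, of "u / ?P powi a" a] that by (simp only: rescale)
  have span: "?L = {lin_comb (zip cs ?gs) | cs. length cs = length ?gs \<and> set cs \<subseteq> Zp v}"
  proof (intro set_eqI iffI)
    fix x assume "x \<in> ?L"
    then obtain x0 y1 y2 y3 z1 z2 z3 w where x: "x = Oct x0 (y1, y2, y3) (z1, z2, z3) w"
      and "x0 \<in> pZp p v a1" "y1 \<in> pZp p v a2" "y2 \<in> pZp p v a3" "y3 \<in> pZp p v a4"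
        "z1 \<in> pZp p v a5" "z2 \<in> pZp p v a6" "z3 \<in> pZp p v a7" "w \<in> pZp p v a8"
      unfolding Lam_def by blast
    then have "set (coeffs x0 y1 y2 y3 z1 z2 z3 w) \<subseteq> Zp v"
      and "length (coeffs x0 y1 y2 y3 z1 z2 z3 w) = length ?gs"
      by (simp_all add: coeffs_def Lam_gens_def unscale)
    then show "x \<in> {lin_comb (zip cs ?gs) | cs. length cs = length ?gs \<and> set cs \<subseteq> Zp v}"
      unfolding x decomp by blast
  next
    fix x assume "x \<in> {lin_comb (zip cs ?gs) | cs. length cs = length ?gs \<and> set cs \<subseteq> Zp v}"
    then obtain cs where x: "x = lin_comb (zip cs ?gs)" and "length cs = 8" and cs: "set cs \<subseteq> Zp v"
      by (auto simp: Lam_gens_def)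
    then obtain c1 c2 c3 c4 c5 c6 c7 c8 where c: "cs = [c1, c2, c3, c4, c5, c6, c7, c8]"
      using length_8_conv by blast
    show "x \<in> ?L"
      using cs unfolding x c lin_comb_Lam_gens Lam_mem by (simp add: times_powi_in_pZp_iff[OF Q])
  qed
  have "\<exists>cs gs. set gs \<subseteq> ?L \<and> x = lin_comb (zip cs gs)" for x
    using decomp Lam_gens_in_Lam[OF Q] by (metis oct.exhaust prod_cases3)
  then show ?thesis unfolding is_lattice_def using span by blast
qed

lemma one_in_Lam_iff:
  assumes "is_Qp p (v::'k::field \<Rightarrow> int)"
  shows "oct_one \<in> Lam p v a1 a2 a3 a4 a5 a6 a7 a8 \<longleftrightarrow> a1 \<le> 0 \<and> a8 \<le> 0"
  by (simp add: oct_one_def Lam_mem pZp_zero one_in_pZp_iff[OF assms])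

section \<open>Multiplicative closure\<close>

text \<open>Necessity: the product of two generators p^ai e_i and p^aj e_j is \<plusminus>p^(ai+aj) e_k
  for the slot k dictated by the dot and cross products, so closure gives ak \<le> ai + aj.\<close>

lemma Lam_mult_closed_necessary:
  assumes Q: "is_Qp p (v::'k::field \<Rightarrow> int)"
    and closed: "\<forall>x\<in>Lam p v a1 a2 a3 a4 a5 a6 a7 a8. \<forall>y\<in>Lam p v a1 a2 a3 a4 a5 a6 a7 a8.
                   oct_mult x y \<in> Lam p v a1 a2 a3 a4 a5 a6 a7 a8"
  shows "a1 \<le> a1 + a1" "a8 \<le> a8 + a8"
    and "a1 \<le> a2 + a5" "a1 \<le> a3 + a6" "a1 \<le> a4 + a7"
    and "a7 \<le> a2 + a3" "a6 \<le> a2 + a4" "a5 \<le> a3 + a4"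
    and "a4 \<le> a5 + a6" "a3 \<le> a5 + a7" "a2 \<le> a6 + a7"
proof -
  let ?L = "Lam p v a1 a2 a3 a4 a5 a6 a7 a8"
  define es where "es = (Lam_gens p a1 a2 a3 a4 a5 a6 a7 a8 :: 'k oct list)"
  have "es ! i \<in> ?L" if "i < 8" for i
    using Lam_gens_in_Lam[OF Q] that nth_mem[of i es] by (auto simp: es_def Lam_gens_def)
  with closed have prod: "oct_mult (es ! i) (es ! j) \<in> ?L" if "i < 8" "j < 8" for i j
    using that by blast
  note mem = es_def Lam_gens_def Lam_mem pZp_zero powi_in_pZp_iff[OF Q]
    powi_mult_in_pZp_iff[OF Q] pZp_uminus_iff[OF Q]
  show "a1 \<le> a1 + a1" using prod[of 0 0] by (simp add: mem)
  show "a8 \<le> a8 + a8" using prod[of 7 7] by (simp add: mem)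
  show "a1 \<le> a2 + a5" using prod[of 1 4] by (simp add: mem)
  show "a1 \<le> a3 + a6" using prod[of 2 5] by (simp add: mem)
  show "a1 \<le> a4 + a7" using prod[of 3 6] by (simp add: mem)
  show "a7 \<le> a2 + a3" using prod[of 1 2] by (simp add: mem)
  show "a6 \<le> a2 + a4" using prod[of 3 1] by (simp add: mem add.commute)
  show "a5 \<le> a3 + a4" using prod[of 2 3] by (simp add: mem)
  show "a4 \<le> a5 + a6" using prod[of 4 5] by (simp add: mem)
  show "a3 \<le> a5 + a7" using prod[of 6 4] by (simp add: mem add.commute)
  show "a2 \<le> a6 + a7" using prod[of 5 6] by (simp add: mem)
qed

text \<open>Sufficiency: under the inequalities each coordinate of a product is a signed sum of
  products of coordinates whose exponents add up to at least the target exponent.\<close>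

lemma Lam_mult_closed:
  assumes Q: "is_Qp p (v::'k::field \<Rightarrow> int)"
    and "a1 = 0" "a8 = 0" "0 \<le> a2 + a5" "0 \<le> a3 + a6" "0 \<le> a4 + a7"
        "a7 \<le> a2 + a3" "a6 \<le> a2 + a4" "a5 \<le> a3 + a4"
        "a4 \<le> a5 + a6" "a3 \<le> a5 + a7" "a2 \<le> a6 + a7"
    and x: "x \<in> Lam p v a1 a2 a3 a4 a5 a6 a7 a8" and y: "y \<in> Lam p v a1 a2 a3 a4 a5 a6 a7 a8"
  shows "oct_mult x y \<in> Lam p v a1 a2 a3 a4 a5 a6 a7 a8"
proof -
  obtain x0 y1 y2 y3 z1 z2 z3 w where xe: "x = Oct x0 (y1, y2, y3) (z1, z2, z3) w"
    and "x0 \<in> pZp p v a1" "y1 \<in> pZp p v a2" "y2 \<in> pZp p v a3" "y3 \<in> pZp p v a4"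
        "z1 \<in> pZp p v a5" "z2 \<in> pZp p v a6" "z3 \<in> pZp p v a7" "w \<in> pZp p v a8"
    using x unfolding Lam_def by blast
  moreover obtain x0' y1' y2' y3' z1' z2' z3' w' where ye: "y = Oct x0' (y1', y2', y3') (z1', z2', z3') w'"
    and "x0' \<in> pZp p v a1" "y1' \<in> pZp p v a2" "y2' \<in> pZp p v a3" "y3' \<in> pZp p v a4"
        "z1' \<in> pZp p v a5" "z2' \<in> pZp p v a6" "z3' \<in> pZp p v a7" "w' \<in> pZp p v a8"
    using y unfolding Lam_def by blast
  ultimately show ?thesis
    unfolding xe ye oct_mult.simps dot3.simps cross3.simps add3.simps sc3.simps minus3.simps Lam_mem
    using assms(2-12)
    by (intro conjI pZp_add[OF Q] pZp_diff[OF Q] pZp_mult[OF Q]) (assumption | linarith)+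
qed

theorem mainTheorem11:
  fixes p :: nat and v :: "'k::field \<Rightarrow> int" and a1 a2 a3 a4 a5 a6 a7 a8 :: int
  assumes "is_Qp p v" and "odd p"
  shows "is_order v (Lam p v a1 a2 a3 a4 a5 a6 a7 a8) \<longleftrightarrow>
    (a1 = 0 \<and> a8 = 0 \<and>
     a2 + a5 \<ge> 0 \<and> a3 + a6 \<ge> 0 \<and> a4 + a7 \<ge> 0 \<and>
     a2 + a3 \<ge> a7 \<and> a2 + a4 \<ge> a6 \<and> a3 + a4 \<ge> a5 \<and>
     a5 + a6 \<ge> a4 \<and> a5 + a7 \<ge> a3 \<and> a6 + a7 \<ge> a2)"
proof
  assume "is_order v (Lam p v a1 a2 a3 a4 a5 a6 a7 a8)"
  then have "a1 \<le> 0 \<and> a8 \<le> 0"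
    and closed: "\<forall>x\<in>Lam p v a1 a2 a3 a4 a5 a6 a7 a8. \<forall>y\<in>Lam p v a1 a2 a3 a4 a5 a6 a7 a8.
                   oct_mult x y \<in> Lam p v a1 a2 a3 a4 a5 a6 a7 a8"
    using one_in_Lam_iff[OF assms(1)] unfolding is_order_def by auto
  with Lam_mult_closed_necessary[OF assms(1) closed] show "a1 = 0 \<and> a8 = 0 \<and>
     a2 + a5 \<ge> 0 \<and> a3 + a6 \<ge> 0 \<and> a4 + a7 \<ge> 0 \<and>
     a2 + a3 \<ge> a7 \<and> a2 + a4 \<ge> a6 \<and> a3 + a4 \<ge> a5 \<and>
     a5 + a6 \<ge> a4 \<and> a5 + a7 \<ge> a3 \<and> a6 + a7 \<ge> a2"
    by linarith
next
  assume "a1 = 0 \<and> a8 = 0 \<and>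
     a2 + a5 \<ge> 0 \<and> a3 + a6 \<ge> 0 \<and> a4 + a7 \<ge> 0 \<and>
     a2 + a3 \<ge> a7 \<and> a2 + a4 \<ge> a6 \<and> a3 + a4 \<ge> a5 \<and>
     a5 + a6 \<ge> a4 \<and> a5 + a7 \<ge> a3 \<and> a6 + a7 \<ge> a2"
  then show "is_order v (Lam p v a1 a2 a3 a4 a5 a6 a7 a8)"
    unfolding is_order_def
    using Lam_is_lattice[OF assms(1)] one_in_Lam_iff[OF assms(1)] Lam_mult_closed[OF assms(1)]
    by simp
qed

end
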